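(* Let $a,b,r,s,t,u,p,q,v,w$ be indeterminates. Define monic polynomials $p_n(x)$ by $p_{-1}(x)=0$, $p_0(x)=1$ and $$p_{n+1}(x)=(x-b_n)p_n(x)-\lambda_n p_{n-1}(x)\quad(n\ge 0),$$ where $b_n=a[n+1]_{r,s}+b[n]_{t,u}$ and $\lambda_n=ab[n]_{p,q}[n]_{v,w}$. Let $\mathcal L$ be the unique linear functional on polynomials in $x$ (with coefficients rational functions in the parameters) such that $\mathcal L(1)=1$ and $\mathcal L(p_n)=0$ for all $n\ge1$, and let $\mu_n=\mathcal L(x^n)$ be its $n$-th moment. Then for every $n\ge 0$, $$\mu_n=\sum_{\sigma\in S_n} r^{\mathrm{lsg(sing)}(\sigma)}s^{\mathrm{rsg(sing)}(\sigma)}t^{\mathrm{lsg(cont)}(\sigma)}u^{\mathrm{rsg(cont)}(\sigma)}p^{\mathrm{lsg(op)}(\sigma)}q^{\mathrm{rsg(op)}(\sigma)}v^{\mathrm{lsg(clos)}(\sigma)}w^{\mathrm{rsg(clos)}(\sigma)}a^{\mathrm{run}(\sigma)}b^{\,n-\mathrm{run}(\sigma)}.$$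
   Context: Notation: $[n]_{r,s}=\frac{r^n-s^n}{r-s}=r^{n-1}+r^{n-2}s+\dots+s^{n-1}$ (so $[0]_{r,s}=0$). A permutation $\sigma\in S_n$ is written as the word $\sigma(1)\sigma(2)\cdots\sigma(n)$. Its runs are the maximal contiguous increasing segments $\sigma(i)<\sigma(i+1)<\dots<\sigma(j)$ of this word; $\mathrm{run}(\sigma)$ denotes the number of runs (equal to the number of descents plus one). A run of length at least 2 is a proper run; a run of length 1 is a singleton run. The values of $\sigma$ are split into four classes: $\mathrm{op}(\sigma)$ = first elements of proper runs (openers), $\mathrm{clos}(\sigma)$ = last elements of proper runs (closers), $\mathrm{sing}(\sigma)$ = elements forming singleton runs, $\mathrm{cont}(\sigma)$ = all other elements (continuators). For $i\in\{1,\dots,n\}$, $\mathrm{lsg}(i)$ is the number of runs of $\sigma$ lying strictly to the left of $i$ (i.e. not containing $i$ and positioned before it) that contain both an element smaller than $i$ and an element greater than $i$; $\mathrm{rsg}(i)$ is the analogous number of runs strictly to the right of $i$. For a class $X\in\{\mathrm{op},\mathrm{clos},\mathrm{sing},\mathrm{cont}\}$, $\mathrm{lsg}(X)(\sigma)=\sum_{i\in X(\sigma)}\mathrm{lsg}(i)$ and $\mathrm{rsg}(X)(\sigma)=\sum_{i\in X(\sigma)}\mathrm{rsg}(i)$. *)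

theory Defs
  imports "HOL-Computational_Algebra.Polynomial"
begin

definition qbr :: "'a::comm_ring_1 \<Rightarrow> 'a \<Rightarrow> nat \<Rightarrow> 'a" where
  "qbr r s n = (\<Sum>i<n. r ^ (n - 1 - i) * s ^ i)"

definition bcoef :: "'a::comm_ring_1 \<Rightarrow> 'a \<Rightarrow> 'a \<Rightarrow> 'a \<Rightarrow> 'a \<Rightarrow> 'a \<Rightarrow> nat \<Rightarrow> 'a" where
  "bcoef a b r s t u n = a * qbr r s (n + 1) + b * qbr t u n"

definition lcoef :: "'a::comm_ring_1 \<Rightarrow> 'a \<Rightarrow> 'a \<Rightarrow> 'a \<Rightarrow> 'a \<Rightarrow> 'a \<Rightarrow> nat \<Rightarrow> 'a" where
  "lcoef a b p q v w n = a * b * qbr p q n * qbr v w n"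

fun OP :: "'a::comm_ring_1 \<Rightarrow> 'a \<Rightarrow> 'a \<Rightarrow> 'a \<Rightarrow> 'a \<Rightarrow> 'a \<Rightarrow> 'a \<Rightarrow> 'a \<Rightarrow> 'a \<Rightarrow> 'a
            \<Rightarrow> nat \<Rightarrow> 'a poly" where
  "OP a b r s t u p q v w 0 = 1"
| "OP a b r s t u p q v w (Suc 0) = [:- bcoef a b r s t u 0, 1:]"
| "OP a b r s t u p q v w (Suc (Suc n)) =
     [:- bcoef a b r s t u (Suc n), 1:] * OP a b r s t u p q v w (Suc n)
     - smult (lcoef a b p q v w (Suc n)) (OP a b r s t u p q v w n)"

(* Permutations of {1..n} are represented as words (lists) w = [w!0, ..., w!(n-1)];
   positions are 0-based. *)

definition run_start :: "nat list \<Rightarrow> nat \<Rightarrow> bool" where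
  "run_start w i \<longleftrightarrow> i < length w \<and> (i = 0 \<or> w ! (i - 1) > w ! i)"

definition run_end :: "nat list \<Rightarrow> nat \<Rightarrow> bool" where
  "run_end w i \<longleftrightarrow> i < length w \<and> (Suc i = length w \<or> w ! i > w ! Suc i)"

definition run_end_of :: "nat list \<Rightarrow> nat \<Rightarrow> nat" where
  "run_end_of w i = (LEAST j. i \<le> j \<and> run_end w j)"

definition run_elems :: "nat list \<Rightarrow> nat \<Rightarrow> nat set" where
  "run_elems w st = {w ! j | j. st \<le> j \<and> j \<le> run_end_of w st}"

definition straddles :: "nat list \<Rightarrow> nat \<Rightarrow> nat \<Rightarrow> bool" where
  "straddles w st x \<longleftrightarrow> (\<exists>y\<in>run_elems w st. y < x) \<and> (\<exists>y\<in>run_elems w st. x < y)"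

definition nruns :: "nat list \<Rightarrow> nat" where
  "nruns w = card {i. run_start w i}"

definition lsg :: "nat list \<Rightarrow> nat \<Rightarrow> nat" where
  "lsg w k = card {st. run_start w st \<and> run_end_of w st < k \<and> straddles w st (w ! k)}"

definition rsg :: "nat list \<Rightarrow> nat \<Rightarrow> nat" where
  "rsg w k = card {st. run_start w st \<and> k < st \<and> straddles w st (w ! k)}"

definition is_op :: "nat list \<Rightarrow> nat \<Rightarrow> bool" where
  "is_op w k \<longleftrightarrow> run_start w k \<and> \<not> run_end w k"
definition is_clos :: "nat list \<Rightarrow> nat \<Rightarrow> bool" where
  "is_clos w k \<longleftrightarrow> run_end w k \<and> \<not> run_start w k"
definition is_sing :: "nat list \<Rightarrow> nat \<Rightarrow> bool" where
  "is_sing w k \<longleftrightarrow> run_start w k \<and> run_end w k"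
definition is_cont :: "nat list \<Rightarrow> nat \<Rightarrow> bool" where
  "is_cont w k \<longleftrightarrow> k < length w \<and> \<not> run_start w k \<and> \<not> run_end w k"

definition lsgX :: "(nat list \<Rightarrow> nat \<Rightarrow> bool) \<Rightarrow> nat list \<Rightarrow> nat" where
  "lsgX X w = (\<Sum>k\<in>{k. k < length w \<and> X w k}. lsg w k)"
definition rsgX :: "(nat list \<Rightarrow> nat \<Rightarrow> bool) \<Rightarrow> nat list \<Rightarrow> nat" where
  "rsgX X w = (\<Sum>k\<in>{k. k < length w \<and> X w k}. rsg w k)"

definition perms :: "nat \<Rightarrow> nat list set" where
  "perms n = {w. distinct w \<and> set w = {1..n}}"

end

theory Submission
  imports Defs
begin

(*
  Expanding x^n in the basis of the orthogonal polynomials, L(x^n) is the coefficient of p_0,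
  and the three-term recurrence makes these coefficients weighted Motzkin path sums
  (level steps at height h weigh b_h, down steps from height h weigh lambda_h).

  Combinatorially, a permutation is built by inserting 1, 2, ..., n in increasing order into a
  list of increasing blocks, some of which are open, i.e. will still be extended at their end.
  An open block counts as containing a larger value, so lsg and rsg of a value are already
  final when it is inserted; for the new largest value they are the numbers of open blocks to
  its left and right. The new value either starts a block (singleton or opener) or is appended
  to an open block (continuator or closer), and summing over its admissible positions produces
  the q-brackets of b_n and lambda_n. Hence the weight of the structures with k open blocks is
  the Motzkin sum ending at height k times prod_{i<k} a[i+1]_{p,q}; for k = 0 the structures
  are exactly the permutations, cut into their runs.
*)

section \<open>Moments as weighted Motzkin paths\<close>

fun motzkin_sum :: "(nat \<Rightarrow> 'a::comm_semiring_1) \<Rightarrow> (nat \<Rightarrow> 'a) \<Rightarrow> nat \<Rightarrow> nat \<Rightarrow> 'a" where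
  "motzkin_sum \<beta> \<gamma> 0 k = (if k = 0 then 1 else 0)"
| "motzkin_sum \<beta> \<gamma> (Suc m) k = (if k = 0 then 0 else motzkin_sum \<beta> \<gamma> m (k - 1))
     + \<beta> k * motzkin_sum \<beta> \<gamma> m k + \<gamma> (Suc k) * motzkin_sum \<beta> \<gamma> m (Suc k)"

lemma motzkin_sum_above_length: "m < k \<Longrightarrow> motzkin_sum \<beta> \<gamma> m k = 0"
  by (induction m arbitrary: k) auto

lemma X_power_three_term_expansion:
  fixes P :: "nat \<Rightarrow> 'a::comm_ring_1 poly"
  assumes three_term: "\<And>k. [:0, 1:] * P k = P (Suc k) + smult (\<beta> k) (P k) + smult (\<gamma> k) (P (k - 1))"
    and "\<gamma> 0 = 0" and "P 0 = 1"
  shows "[:0, 1:] ^ m = (\<Sum>k\<le>m. smult (motzkin_sum \<beta> \<gamma> m k) (P k))"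
proof (induction m)
  case (Suc m)
  let ?\<nu> = "motzkin_sum \<beta> \<gamma> m"
  have "[:0, 1:] ^ Suc m = (\<Sum>k\<le>m. smult (?\<nu> k) ([:0, 1:] * P k))"
    using Suc by (simp add: sum_distrib_left mult_smult_right)
  also have "\<dots> = (\<Sum>k\<le>m. smult (?\<nu> k) (P (Suc k)))
      + (\<Sum>k\<le>m. smult (\<beta> k * ?\<nu> k) (P k))
      + (\<Sum>k\<le>m. smult (\<gamma> k * ?\<nu> k) (P (k - 1)))"
    unfolding three_term by (simp add: sum.distrib smult_add_right mult.commute)
  also have "(\<Sum>k\<le>m. smult (?\<nu> k) (P (Suc k))) =
      (\<Sum>k\<le>Suc m. smult (if k = 0 then 0 else ?\<nu> (k - 1)) (P k))"
    by (subst sum.atMost_Suc_shift) simp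
  also have "(\<Sum>k\<le>m. smult (\<beta> k * ?\<nu> k) (P k)) = (\<Sum>k\<le>Suc m. smult (\<beta> k * ?\<nu> k) (P k))"
    by (simp add: motzkin_sum_above_length)
  also have "(\<Sum>k\<le>m. smult (\<gamma> k * ?\<nu> k) (P (k - 1))) =
      (\<Sum>k\<le>Suc m. smult (\<gamma> (Suc k) * ?\<nu> (Suc k)) (P k))"
  proof -
    define g where "g j = smult (\<gamma> j * ?\<nu> j) (P (j - 1))" for j
    have "(\<Sum>k\<le>Suc (Suc m). g k) = g 0 + (\<Sum>k\<le>Suc m. g (Suc k))"
      by (rule sum.atMost_Suc_shift)
    moreover have "(\<Sum>k\<le>Suc (Suc m). g k) = (\<Sum>k\<le>m. g k)"
      by (simp add: g_def motzkin_sum_above_length)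
    ultimately show ?thesis by (simp add: g_def \<open>\<gamma> 0 = 0\<close>)
  qed
  finally show ?case
    by (simp add: sum.distrib[symmetric] smult_add_left[symmetric] algebra_simps)
qed (simp add: \<open>P 0 = 1\<close>)

lemma lcoef_0 [simp]: "lcoef a b p q v w 0 = 0"
  by (simp add: lcoef_def qbr_def)

lemma X_mult_OP:
  "[:0, 1:] * OP a b r s t u p q v w k = OP a b r s t u p q v w (Suc k)
     + smult (bcoef a b r s t u k) (OP a b r s t u p q v w k)
     + smult (lcoef a b p q v w k) (OP a b r s t u p q v w (k - 1))"
proof (cases k)
  case (Suc n)
  have "[:- c, 1:] = [:0, 1:] - [:c:]" for c :: 'a by simp
  then show ?thesis unfolding Suc
    by (simp only: OP.simps) (simp add: algebra_simps)
qed simp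

lemma moment_eq_motzkin_sum:
  fixes L :: "'a::comm_ring_1 poly \<Rightarrow> 'a"
  assumes L_add: "\<And>f g. L (f + g) = L f + L g"
    and L_smult: "\<And>c f. L (smult c f) = c * L f"
    and L_one: "L 1 = 1"
    and L_orth: "\<And>m. m \<ge> 1 \<Longrightarrow> L (OP a b r s t u p q v w m) = 0"
  shows "L ([:0, 1:] ^ n) = motzkin_sum (bcoef a b r s t u) (lcoef a b p q v w) n 0"
proof -
  define \<nu> where "\<nu> = motzkin_sum (bcoef a b r s t u) (lcoef a b p q v w) n"
  have L_sum: "L (\<Sum>k\<in>K. g k) = (\<Sum>k\<in>K. L (g k))" if "finite K" for K and g :: "nat \<Rightarrow> 'a poly"
    using that by (induction K rule: finite_induct) (simp_all add: L_add L_smult[of 0 0, simplified])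
  have "[:0, 1:] ^ n = (\<Sum>k\<le>n. smult (\<nu> k) (OP a b r s t u p q v w k))"
    unfolding \<nu>_def by (rule X_power_three_term_expansion[OF X_mult_OP lcoef_0]) simp
  then have "L ([:0, 1:] ^ n) = (\<Sum>k\<le>n. \<nu> k * L (OP a b r s t u p q v w k))"
    by (simp add: L_sum L_smult)
  also have "\<dots> = (\<Sum>k\<in>{0}. \<nu> k * L (OP a b r s t u p q v w k))"
    by (rule sum.mono_neutral_right) (auto simp: L_orth)
  finally show ?thesis by (simp add: L_one \<nu>_def)
qed

section \<open>Block structures\<close>

lemma successively_append_Cons_iff:
  "successively P (A @ c # B) \<longleftrightarrow> successively P A \<and> successively P B \<and>
     (A = [] \<or> P (last A) c) \<and> (B = [] \<or> P c (hd B))"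
  by (auto simp: successively_append_iff successively_Cons)

lemma set_remove_max_atLeastAtMost:
  assumes "distinct (X @ Suc m # Y)" and "set (X @ Suc m # Y) = {1..Suc m}"
  shows "set X \<union> set Y = {1..m}"
proof -
  have "set X \<union> set Y = set (X @ Suc m # Y) - {Suc m}" using assms(1) by auto
  also have "\<dots> = {1..m}" unfolding assms(2) by auto
  finally show ?thesis .
qed

lemma last_sorted_wrt_less_eq_max:
  fixes ys :: "'a::linorder list"
  assumes "sorted_wrt (<) ys" "x \<in> set ys" "\<forall>y\<in>set ys. y \<le> x"
  shows "last ys = x"
proof -
  obtain i where i: "i < length ys" "ys ! i = x" using assms(2) by (auto simp: in_set_conv_nth)
  have "i = length ys - 1"
  proof (rule ccontr)
    assume "i \<noteq> length ys - 1"
    then have "x < ys ! (length ys - 1)" using sorted_wrt_nth_less[OF assms(1)] i by fastforce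
    moreover have "ys ! (length ys - 1) \<in> set ys" using i by simp
    ultimately show False using assms(3) by fastforce
  qed
  then show ?thesis using i by (metis last_conv_nth list.size(3) not_less0)
qed

lemma prod_list_map_conv_prod_nth: "prod_list (map f xs) = (\<Prod>k<length xs. f (xs ! k))"
proof -
  have "map f xs = map (\<lambda>k. f (xs ! k)) [0..<length xs]"
    by (rule nth_equalityI) auto
  then show ?thesis
    by (simp add: prod.distinct_set_conv_list[symmetric] atLeast0LessThan)
qed

(* An increasing run of the permutation under construction, flagged as open when it is still
   to be extended at its end by larger values. *)
type_synonym block = "nat list \<times> bool"

definition word_of :: "block list \<Rightarrow> nat list" where
  "word_of R = concat (map fst R)"

definition n_open :: "block list \<Rightarrow> nat" where
  "n_open R = length (filter snd R)"

(* An open block will still receive a larger value, so it counts as containing one. *)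
definition block_straddles :: "nat \<Rightarrow> block \<Rightarrow> bool" where
  "block_straddles x c \<longleftrightarrow> (\<exists>y\<in>set (fst c). y < x) \<and> ((\<exists>y\<in>set (fst c). x < y) \<or> snd c)"

definition n_straddling :: "nat \<Rightarrow> block list \<Rightarrow> nat" where
  "n_straddling x R = length (filter (block_straddles x) R)"

fun lsg_blocks :: "nat \<Rightarrow> block list \<Rightarrow> nat" where
  "lsg_blocks x [] = 0"
| "lsg_blocks x (c # R) =
     (if x \<in> set (fst c) then 0 else (if block_straddles x c then 1 else 0) + lsg_blocks x R)"

fun rsg_blocks :: "nat \<Rightarrow> block list \<Rightarrow> nat" where
  "rsg_blocks x [] = 0"
| "rsg_blocks x (c # R) = (if x \<in> set (fst c) then n_straddling x R else rsg_blocks x R)"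

(* On a permutation cut into its runs this is (run_start, run_end): the four values encode
   singleton, opener, continuator and closer. *)
fun class_blocks :: "nat \<Rightarrow> block list \<Rightarrow> bool \<times> bool" where
  "class_blocks x [] = (False, False)"
| "class_blocks x (c # R) =
     (if x \<in> set (fst c) then (x = hd (fst c), x = last (fst c) \<and> \<not> snd c) else class_blocks x R)"

abbreviation descent_or_open :: "block \<Rightarrow> block \<Rightarrow> bool" where
  "descent_or_open c d \<equiv> snd c \<or> hd (fst d) < last (fst c)"

definition block_structure :: "nat \<Rightarrow> block list \<Rightarrow> bool" where
  "block_structure m R \<longleftrightarrow> distinct (word_of R) \<and> set (word_of R) = {1..m} \<and>
     (\<forall>c\<in>set R. fst c \<noteq> [] \<and> sorted_wrt (<) (fst c)) \<and> successively descent_or_open R"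

definition block_structures :: "nat \<Rightarrow> nat \<Rightarrow> block list set" where
  "block_structures m k = {R. block_structure m R \<and> n_open R = k}"

(* Inserts a block right after the j-th open block (at the front for j = 0): a new largest
   value cannot follow a closed block, which must be followed by a descent. *)
fun insert_block :: "nat \<Rightarrow> block \<Rightarrow> block list \<Rightarrow> block list" where
  "insert_block 0 c R = c # R"
| "insert_block (Suc j) c [] = [c]"
| "insert_block (Suc j) c (d # R) =
     d # (if snd d then insert_block j c R else insert_block (Suc j) c R)"

fun map_open_block :: "nat \<Rightarrow> (block \<Rightarrow> block) \<Rightarrow> block list \<Rightarrow> block list" where
  "map_open_block j f [] = []"
| "map_open_block j f (d # R) =
     (if snd d then (if j = 0 then f d # R else d # map_open_block (j - 1) f R)
      else d # map_open_block j f R)"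

(* Removing the largest value reopens the block it had been appended to. *)
definition remove_value :: "nat \<Rightarrow> block list \<Rightarrow> block list" where
  "remove_value x R = filter (\<lambda>c. fst c \<noteq> [])
     (map (\<lambda>c. (removeAll x (fst c), snd c \<or> x \<in> set (fst c))) R)"

lemma word_of_simps [simp]:
  "word_of [] = []" "word_of (c # R) = fst c @ word_of R" "word_of (A @ B) = word_of A @ word_of B"
  by (auto simp: word_of_def)

lemma n_open_simps [simp]:
  "n_open [] = 0" "n_open (c # R) = (if snd c then Suc (n_open R) else n_open R)"
  "n_open (A @ B) = n_open A + n_open B"
  by (auto simp: n_open_def)

lemma n_straddling_simps [simp]:
  "n_straddling x [] = 0"
  "n_straddling x (c # R) = (if block_straddles x c then Suc (n_straddling x R) else n_straddling x R)"
  "n_straddling x (A @ B) = n_straddling x A + n_straddling x B"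
  by (auto simp: n_straddling_def)

lemma lsg_blocks_append:
  "lsg_blocks x (A @ B) =
     (if x \<in> set (word_of A) then lsg_blocks x A else n_straddling x A + lsg_blocks x B)"
  by (induction A) auto

lemma rsg_blocks_append:
  "rsg_blocks x (A @ B) =
     (if x \<in> set (word_of A) then rsg_blocks x A + n_straddling x B else rsg_blocks x B)"
  by (induction A) auto

lemma class_blocks_append:
  "class_blocks x (A @ B) = (if x \<in> set (word_of A) then class_blocks x A else class_blocks x B)"
  by (induction A) auto

lemma in_word_of: "c \<in> set R \<Longrightarrow> y \<in> set (fst c) \<Longrightarrow> y \<in> set (word_of R)"
  by (auto simp: word_of_def)

lemma block_straddles_new_block: "x \<le> m \<Longrightarrow> \<not> block_straddles x ([Suc m], ob)"
  by (auto simp: block_straddles_def)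

lemma block_straddles_extended_block:
  "x \<le> m \<Longrightarrow> block_straddles x (ys @ [Suc m], ob) = block_straddles x (ys, True)"
  by (auto simp: block_straddles_def)

lemma n_straddling_above:
  "\<forall>c\<in>set A. fst c \<noteq> [] \<and> (\<forall>y\<in>set (fst c). y < x) \<Longrightarrow> n_straddling x A = n_open A"
proof (induction A)
  case (Cons c A)
  have "block_straddles x c \<longleftrightarrow> snd c"
    using Cons.prems by (cases "fst c") (auto simp: block_straddles_def)
  then show ?case using Cons by auto
qed simp

lemma n_open_pos: "A \<noteq> [] \<Longrightarrow> snd (last A) \<Longrightarrow> 0 < n_open A"
  by (induction A) (auto split: if_splits)

lemma insert_block_split:
  "j \<le> n_open R \<Longrightarrow> \<exists>A B. R = A @ B \<and> n_open A = j \<and> (A = [] \<or> snd (last A)) \<and>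
     insert_block j c R = A @ c # B"
proof (induction j c R rule: insert_block.induct)
  case (1 c R)
  then show ?case by (intro exI[of _ "[]"] exI[of _ R]) auto
next
  case (3 j c d R)
  show ?case
  proof (cases "snd d")
    case True
    with 3 obtain A B where "R = A @ B" "n_open A = j" "A = [] \<or> snd (last A)"
        "insert_block j c R = A @ c # B"
      by auto
    with True show ?thesis by (intro exI[of _ "d # A"] exI[of _ B]) auto
  next
    case False
    with 3 obtain A B where "R = A @ B" "n_open A = Suc j" "A = [] \<or> snd (last A)"
        "insert_block (Suc j) c R = A @ c # B"
      by auto
    with False show ?thesis by (intro exI[of _ "d # A"] exI[of _ B]) auto
  qed
qed simp

lemma insert_block_append:
  "A = [] \<or> snd (last A) \<Longrightarrow> insert_block (n_open A) c (A @ B) = A @ c # B"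
proof (induction A)
  case (Cons d A)
  show ?case
  proof (cases "snd d")
    case True
    then show ?thesis using Cons by (cases A) auto
  next
    case False
    then have "A \<noteq> []" "snd (last A)" using Cons.prems by (auto split: if_splits)
    then obtain n where "n_open A = Suc n" using n_open_pos gr0_conv_Suc by blast
    then show ?thesis using Cons False \<open>A \<noteq> []\<close> by auto
  qed
qed simp

lemma map_open_block_split:
  "j < n_open R \<Longrightarrow> \<exists>A d B. R = A @ d # B \<and> snd d \<and> n_open A = j \<and>
     map_open_block j f R = A @ f d # B"
proof (induction j f R rule: map_open_block.induct)
  case (2 j f d R)
  show ?case
  proof (cases "snd d")
    case True
    show ?thesis
    proof (cases "j = 0")
      case True
      with \<open>snd d\<close> show ?thesis by (intro exI[of _ "[]"]) auto
    next
      case False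
      have "j - 1 < n_open R" using 2(3) \<open>snd d\<close> False by simp
      with \<open>snd d\<close> False 2(1) obtain A e B where "R = A @ e # B" "snd e" "n_open A = j - 1"
          "map_open_block (j - 1) f R = A @ f e # B"
        by blast
      with \<open>snd d\<close> False show ?thesis by (intro exI[of _ "d # A"]) auto
    qed
  next
    case False
    with 2 obtain A e B where "R = A @ e # B" "snd e" "n_open A = j"
        "map_open_block j f R = A @ f e # B"
      by auto
    with False show ?thesis by (intro exI[of _ "d # A"]) auto
  qed
qed simp

lemma map_open_block_append: "snd d \<Longrightarrow> map_open_block (n_open A) f (A @ d # B) = A @ f d # B"
  by (induction A) auto

lemma remove_value_notin:
  "\<forall>c\<in>set R. fst c \<noteq> [] \<Longrightarrow> x \<notin> set (word_of R) \<Longrightarrow> remove_value x R = R"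
  by (induction R) (auto simp: remove_value_def)

lemma remove_value_append: "remove_value x (A @ B) = remove_value x A @ remove_value x B"
  by (simp add: remove_value_def)

lemma hd_in_word_of: "\<forall>c\<in>set B. fst c \<noteq> [] \<Longrightarrow> B \<noteq> [] \<Longrightarrow> hd (fst (hd B)) \<in> set (word_of B)"
  by (cases B) auto

lemma last_in_word_of:
  assumes "\<forall>c\<in>set A. fst c \<noteq> []" "A \<noteq> []"
  shows "last (fst (last A)) \<in> set (word_of A)"
proof -
  have "last A \<in> set A" "fst (last A) \<noteq> []" using assms by auto
  then show ?thesis by (auto intro: in_word_of)
qed

lemma block_structure_insert_new_block:
  assumes "block_structure m (A @ B)" "A = [] \<or> snd (last A)"
  shows "block_structure (Suc m) (A @ ([Suc m], ob) # B)"
proof -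
  have ne: "\<forall>c\<in>set B. fst c \<noteq> []" using assms(1) by (auto simp: block_structure_def)
  have sub: "set (word_of B) \<subseteq> {1..m}" "set (word_of A) \<subseteq> {1..m}"
    using assms(1) by (auto simp: block_structure_def)
  have "B = [] \<or> descent_or_open ([Suc m], ob) (hd B)"
    using hd_in_word_of[OF ne] sub by force
  moreover have "successively descent_or_open A" "successively descent_or_open B"
    using assms(1) by (auto simp: block_structure_def successively_append_iff)
  ultimately have "successively descent_or_open (A @ ([Suc m], ob) # B)"
    unfolding successively_append_Cons_iff using assms(2) by auto
  then show ?thesis using assms(1) sub by (auto simp: block_structure_def)
qed

lemma block_structure_extend_open_block:
  assumes "block_structure m (A @ (ys, True) # B)"
  shows "block_structure (Suc m) (A @ (ys @ [Suc m], ob) # B)"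
proof -
  have ne: "\<forall>c\<in>set B. fst c \<noteq> []" and ys: "ys \<noteq> []" "sorted_wrt (<) ys"
    using assms by (auto simp: block_structure_def)
  have sub: "set (word_of B) \<subseteq> {1..m}" "set (word_of A) \<subseteq> {1..m}" "set ys \<subseteq> {1..m}"
    using assms by (auto simp: block_structure_def)
  have "B = [] \<or> descent_or_open (ys @ [Suc m], ob) (hd B)"
    using hd_in_word_of[OF ne] sub by force
  moreover have "successively descent_or_open A" "successively descent_or_open B"
      "A = [] \<or> descent_or_open (last A) (ys, True)"
    using assms unfolding block_structure_def successively_append_Cons_iff by auto
  ultimately have "successively descent_or_open (A @ (ys @ [Suc m], ob) # B)"
    unfolding successively_append_Cons_iff using ys by auto
  moreover have "sorted_wrt (<) (ys @ [Suc m])" using ys sub by (force simp: sorted_wrt_append)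
  ultimately show ?thesis using assms sub by (auto simp: block_structure_def)
qed

lemma block_structure_top_block:
  assumes "block_structure (Suc m) R"
  obtains A ys ob B where "R = A @ (ys @ [Suc m], ob) # B"
proof -
  have "Suc m \<in> set (word_of R)" using assms by (auto simp: block_structure_def)
  then obtain c where c: "c \<in> set R" "Suc m \<in> set (fst c)" by (auto simp: word_of_def)
  then obtain A B where R: "R = A @ c # B" by (meson split_list)
  have "sorted_wrt (<) (fst c)" using assms c by (auto simp: block_structure_def)
  moreover have "\<forall>y\<in>set (fst c). y \<le> Suc m"
    using assms c(1) by (auto simp: block_structure_def dest: in_word_of)
  ultimately have "fst c = butlast (fst c) @ [Suc m]"
    using last_sorted_wrt_less_eq_max c(2) by (metis append_butlast_last_id empty_iff list.set(1))
  then have "R = A @ (butlast (fst c) @ [Suc m], snd c) # B" using R by (metis prod.collapse)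
  then show thesis by (rule that)
qed

context
  fixes m A ys ob B
  assumes struct: "block_structure (Suc m) (A @ (ys @ [Suc m], ob) # B)"
begin

lemma top_block_values_eq: "set (word_of A) \<union> set ys \<union> set (word_of B) = {1..m}"
proof -
  have "distinct ((word_of A @ ys) @ Suc m # word_of B)"
    "set ((word_of A @ ys) @ Suc m # word_of B) = {1..Suc m}"
    using struct by (auto simp: block_structure_def)
  from set_remove_max_atLeastAtMost[OF this] show ?thesis by auto
qed

lemma top_block_values: "set (word_of A) \<subseteq> {1..m}" "set ys \<subseteq> {1..m}" "set (word_of B) \<subseteq> {1..m}"
  using top_block_values_eq by auto

lemma top_block_others_nonempty: "\<forall>c\<in>set A. fst c \<noteq> []" "\<forall>c\<in>set B. fst c \<noteq> []"
  using struct by (auto simp: block_structure_def)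

lemma top_block_others_below:
  "\<forall>c\<in>set A. fst c \<noteq> [] \<and> (\<forall>y\<in>set (fst c). y < Suc m)"
  "\<forall>c\<in>set B. fst c \<noteq> [] \<and> (\<forall>y\<in>set (fst c). y < Suc m)"
proof -
  have "y < Suc m" if "c \<in> set A \<union> set B" "y \<in> set (fst c)" for c y
    using that in_word_of[of c A y] in_word_of[of c B y] top_block_values by auto
  then show "\<forall>c\<in>set A. fst c \<noteq> [] \<and> (\<forall>y\<in>set (fst c). y < Suc m)"
    "\<forall>c\<in>set B. fst c \<noteq> [] \<and> (\<forall>y\<in>set (fst c). y < Suc m)"
    using top_block_others_nonempty by auto
qed

lemma top_not_in_left: "Suc m \<notin> set (word_of A)"
  using top_block_values by auto

lemma class_blocks_top: "class_blocks (Suc m) (A @ (ys @ [Suc m], ob) # B) = (ys = [], \<not> ob)"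
proof -
  have "Suc m = hd (ys @ [Suc m]) \<longleftrightarrow> ys = []" using top_block_values(2) by (cases ys) auto
  then show ?thesis using top_not_in_left by (simp add: class_blocks_append)
qed

lemma lsg_blocks_top: "lsg_blocks (Suc m) (A @ (ys @ [Suc m], ob) # B) = n_open A"
  using top_not_in_left
  by (simp add: lsg_blocks_append n_straddling_above[OF top_block_others_below(1)])

lemma rsg_blocks_top: "rsg_blocks (Suc m) (A @ (ys @ [Suc m], ob) # B) = n_open B"
  using top_not_in_left
  by (simp add: rsg_blocks_append n_straddling_above[OF top_block_others_below(2)])

lemma remove_value_top:
  "remove_value (Suc m) (A @ (ys @ [Suc m], ob) # B) = A @ (if ys = [] then [] else [(ys, True)]) @ B"
proof -
  have "Suc m \<notin> set (word_of B)" "Suc m \<notin> set ys" using top_block_values by auto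
  then have "remove_value (Suc m) A = A" "remove_value (Suc m) B = B" "removeAll (Suc m) ys = ys"
    using top_not_in_left top_block_others_nonempty by (simp_all add: remove_value_notin)
  then show ?thesis by (simp add: remove_value_append remove_value_def)
qed

lemma top_new_block_after_open:
  assumes "ys = []"
  shows "A = [] \<or> snd (last A)"
proof (cases "A = []")
  case False
  have "descent_or_open (last A) (ys @ [Suc m], ob)"
    using struct False unfolding block_structure_def successively_append_Cons_iff by auto
  moreover have "last (fst (last A)) \<le> m"
    using last_in_word_of[OF top_block_others_nonempty(1) False] top_block_values(1) by auto
  ultimately show ?thesis using assms by auto
qed simp

lemma block_structure_remove_top: "block_structure m (A @ (if ys = [] then [] else [(ys, True)]) @ B)"
proof -
  have s: "successively descent_or_open A" "successively descent_or_open B"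
      "A = [] \<or> descent_or_open (last A) (ys @ [Suc m], ob)"
    using struct unfolding block_structure_def successively_append_Cons_iff by auto
  have "successively descent_or_open (A @ (if ys = [] then [] else [(ys, True)]) @ B)"
  proof (cases "ys = []")
    case True
    then show ?thesis using s top_new_block_after_open by (auto simp: successively_append_iff)
  next
    case False
    then show ?thesis using s by (auto simp: successively_append_Cons_iff)
  qed
  moreover have "distinct (word_of A @ ys @ word_of B)" "sorted_wrt (<) ys"
    using struct by (auto simp: block_structure_def sorted_wrt_append)
  ultimately show ?thesis
    using struct top_block_values_eq by (auto simp: block_structure_def)
qed

end

lemma length_le_length_word_of: "\<forall>c\<in>set R. fst c \<noteq> [] \<Longrightarrow> length R \<le> length (word_of R)"
proof (induction R)
  case (Cons c R)
  then have "1 \<le> length (fst c)" by (cases "fst c") auto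
  then show ?case using Cons by simp
qed simp

lemma length_block_le_length_word_of: "c \<in> set R \<Longrightarrow> length (fst c) \<le> length (word_of R)"
  by (induction R) auto

lemma finite_block_structures: "finite (block_structures m k)"
proof -
  define X where "X = {ys. set ys \<subseteq> {1..m} \<and> length ys \<le> m} \<times> (UNIV :: bool set)"
  have fin: "finite X" unfolding X_def by (intro finite_cartesian_product finite_lists_length_le) auto
  have "block_structures m k \<subseteq> {R. set R \<subseteq> X \<and> length R \<le> m}"
  proof
    fix R assume "R \<in> block_structures m k"
    then have R: "block_structure m R" by (simp add: block_structures_def)
    then have len: "length (word_of R) = m"
      using distinct_card[of "word_of R"] by (auto simp: block_structure_def)
    have "length R \<le> m" using length_le_length_word_of[of R] R len by (auto simp: block_structure_def)
    moreover have "set R \<subseteq> X"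
    proof
      fix c assume c: "c \<in> set R"
      then have "set (fst c) \<subseteq> {1..m}" using R in_word_of[OF c] by (auto simp: block_structure_def)
      moreover have "length (fst c) \<le> m" using length_block_le_length_word_of[OF c] len by simp
      ultimately show "c \<in> X" unfolding X_def by (cases c) auto
    qed
    ultimately show "R \<in> {R. set R \<subseteq> X \<and> length R \<le> m}" by blast
  qed
  moreover have "finite {R. set R \<subseteq> X \<and> length R \<le> m}" by (rule finite_lists_length_le[OF fin])
  ultimately show ?thesis by (rule finite_subset)
qed

lemma block_structures_0: "block_structures 0 k = (if k = 0 then {[]} else {})"
proof -
  have empty: "block_structure 0 R \<longleftrightarrow> R = []" for R
  proof
    assume "block_structure 0 R"
    then have "set (word_of R) = {1..0}" "\<forall>c\<in>set R. fst c \<noteq> []"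
      unfolding block_structure_def by blast+
    then show "R = []" using length_le_length_word_of[of R] by simp
  qed (simp add: block_structure_def)
  show ?thesis unfolding block_structures_def empty by (cases k) auto
qed

section \<open>Weighted counting of block structures\<close>

context
  fixes f :: "bool \<times> bool \<Rightarrow> nat \<Rightarrow> nat \<Rightarrow> 'a::comm_semiring_1"
begin

definition value_weight :: "block list \<Rightarrow> nat \<Rightarrow> 'a" where
  "value_weight R x = f (class_blocks x R) (lsg_blocks x R) (rsg_blocks x R)"

definition structure_weight :: "block list \<Rightarrow> 'a" where
  "structure_weight R = prod_list (map (value_weight R) (word_of R))"

definition structure_sum :: "nat \<Rightarrow> nat \<Rightarrow> 'a" where
  "structure_sum m k = (\<Sum>R\<in>block_structures m k. structure_weight R)"

(* The i-th of the h admissible positions of a new largest value has i open blocks to its left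
   and h - 1 - i to its right. *)
definition position_sum :: "bool \<times> bool \<Rightarrow> nat \<Rightarrow> 'a" where
  "position_sum c h = (\<Sum>i<h. f c i (h - 1 - i))"

lemma value_weight_remove_top:
  assumes "x \<le> m"
  shows "value_weight (A @ (ys @ [Suc m], ob) # B) x =
         value_weight (A @ (if ys = [] then [] else [(ys, True)]) @ B) x"
proof (cases "ys = []")
  case True
  then show ?thesis using assms
    by (simp add: value_weight_def lsg_blocks_append rsg_blocks_append class_blocks_append
        block_straddles_new_block)
next
  case False
  then have "class_blocks x ((ys @ [Suc m], ob) # B) = class_blocks x ((ys, True) # B)"
    using assms by auto
  then show ?thesis using assms False
    by (simp add: value_weight_def lsg_blocks_append rsg_blocks_append class_blocks_append
        block_straddles_extended_block)
qed

lemma structure_weight_remove_top: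
  assumes struct: "block_structure (Suc m) (A @ (ys @ [Suc m], ob) # B)"
  shows "structure_weight (A @ (ys @ [Suc m], ob) # B) =
    structure_weight (remove_value (Suc m) (A @ (ys @ [Suc m], ob) # B))
      * f (ys = [], \<not> ob) (n_open A) (n_open B)"
proof -
  define R' where "R' = A @ (ys @ [Suc m], ob) # B"
  define R where "R = A @ (if ys = [] then [] else [(ys, True)]) @ B"
  have rem: "remove_value (Suc m) R' = R" unfolding R'_def R_def by (rule remove_value_top[OF struct])
  have below: "\<forall>x\<in>set (word_of A @ ys). x \<le> m" "\<forall>x\<in>set (word_of B). x \<le> m"
    using top_block_values[OF struct] by auto
  have "structure_weight R' = prod_list (map (value_weight R') (word_of A @ ys)) *
      value_weight R' (Suc m) * prod_list (map (value_weight R') (word_of B))"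
    by (simp add: structure_weight_def R'_def mult.assoc)
  also have "map (value_weight R') (word_of A @ ys) = map (value_weight R) (word_of A @ ys)"
    using below(1) value_weight_remove_top unfolding R'_def R_def by (auto intro!: map_cong)
  also have "map (value_weight R') (word_of B) = map (value_weight R) (word_of B)"
    using below(2) value_weight_remove_top unfolding R'_def R_def by (auto intro!: map_cong)
  also have "value_weight R' (Suc m) = f (ys = [], \<not> ob) (n_open A) (n_open B)"
    unfolding R'_def value_weight_def
    by (simp add: class_blocks_top[OF struct] lsg_blocks_top[OF struct] rsg_blocks_top[OF struct])
  also have "prod_list (map (value_weight R) (word_of A @ ys)) * f (ys = [], \<not> ob) (n_open A) (n_open B)
      * prod_list (map (value_weight R) (word_of B)) = structure_weight R * f (ys = [], \<not> ob) (n_open A) (n_open B)"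
    by (simp add: structure_weight_def R_def algebra_simps)
  finally show ?thesis using rem by (simp add: R'_def)
qed

lemma structure_sum_mult_position_sum:
  "structure_sum m h * position_sum c n =
    (\<Sum>(R, i)\<in>block_structures m h \<times> {..<n}. structure_weight R * f c i (n - 1 - i))"
proof -
  have "structure_sum m h * position_sum c n =
      (\<Sum>R\<in>block_structures m h. \<Sum>i<n. structure_weight R * f c i (n - 1 - i))"
    unfolding structure_sum_def position_sum_def
    by (simp add: sum_distrib_left sum_distrib_right) (rule sum.swap)
  then show ?thesis by (simp add: sum.cartesian_product)
qed

lemma sum_structure_weight_new_top_block:
  "(\<Sum>R'\<in>{R'\<in>block_structures (Suc m) (h + (if ob then 1 else 0)). class_blocks (Suc m) R' = (True, \<not> ob)}.
      structure_weight R') = structure_sum m h * position_sum (True, \<not> ob) (Suc h)"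
proof -
  let ?c = "([Suc m], ob)"
  have "structure_sum m h * position_sum (True, \<not> ob) (Suc h) =
      (\<Sum>(R, i)\<in>block_structures m h \<times> {..h}. structure_weight R * f (True, \<not> ob) i (h - i))"
    by (simp add: structure_sum_mult_position_sum lessThan_Suc_atMost)
  also have "\<dots> = (\<Sum>R'\<in>{R'\<in>block_structures (Suc m) (h + (if ob then 1 else 0)).
      class_blocks (Suc m) R' = (True, \<not> ob)}. structure_weight R')"
  proof (rule sum.reindex_bij_witness[where j = "\<lambda>(R, i). insert_block i ?c R"
        and i = "\<lambda>R'. (remove_value (Suc m) R', lsg_blocks (Suc m) R')"])
    fix x assume "x \<in> block_structures m h \<times> {..h}"
    then obtain R i where x: "x = (R, i)" "block_structure m R" "n_open R = h" "i \<le> h"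
      by (cases x) (auto simp: block_structures_def)
    then obtain A B where AB: "R = A @ B" "n_open A = i" "A = [] \<or> snd (last A)"
        "insert_block i ?c R = A @ ?c # B"
      using insert_block_split[of i R ?c] by auto
    have struct: "block_structure (Suc m) (A @ ([] @ [Suc m], ob) # B)"
      using block_structure_insert_new_block x AB by simp
    show "(remove_value (Suc m) ((\<lambda>(R, i). insert_block i ?c R) x),
        lsg_blocks (Suc m) ((\<lambda>(R, i). insert_block i ?c R) x)) = x"
      using remove_value_top[OF struct] lsg_blocks_top[OF struct] AB x by simp
    show "(\<lambda>(R, i). insert_block i ?c R) x \<in> {R'\<in>block_structures (Suc m) (h + (if ob then 1 else 0)).
        class_blocks (Suc m) R' = (True, \<not> ob)}"
      using struct class_blocks_top[OF struct] AB x by (auto simp: block_structures_def)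
    show "structure_weight ((\<lambda>(R, i). insert_block i ?c R) x) =
        (\<lambda>(R, i). structure_weight R * f (True, \<not> ob) i (h - i)) x"
    proof -
      have "n_open B = h - i" using AB x by simp
      then show ?thesis using structure_weight_remove_top[OF struct] remove_value_top[OF struct] AB x by simp
    qed
  next
    fix R' assume "R' \<in> {R'\<in>block_structures (Suc m) (h + (if ob then 1 else 0)).
        class_blocks (Suc m) R' = (True, \<not> ob)}"
    then have R': "block_structure (Suc m) R'" "n_open R' = h + (if ob then 1 else 0)"
        "class_blocks (Suc m) R' = (True, \<not> ob)"
      by (auto simp: block_structures_def)
    then obtain A ys ob' B where R'_eq: "R' = A @ (ys @ [Suc m], ob') # B"
      by (elim block_structure_top_block)
    with R' have struct: "block_structure (Suc m) (A @ ([] @ [Suc m], ob) # B)" and "ys = []" "ob' = ob"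
      using class_blocks_top[of m A ys ob' B] by auto
    then have R'_eq: "R' = A @ ?c # B" using R'_eq by simp
    have "remove_value (Suc m) R' = A @ B" "lsg_blocks (Suc m) R' = n_open A"
      using remove_value_top[OF struct] lsg_blocks_top[OF struct] R'_eq by simp_all
    moreover have "block_structure m (A @ B)" "A = [] \<or> snd (last A)"
      using block_structure_remove_top[OF struct] top_new_block_after_open[OF struct] by simp_all
    moreover have "n_open (A @ B) = h" using R'(2) R'_eq by (cases ob) simp_all
    ultimately show "(remove_value (Suc m) R', lsg_blocks (Suc m) R') \<in> block_structures m h \<times> {..h}"
      "(\<lambda>(R, i). insert_block i ?c R) (remove_value (Suc m) R', lsg_blocks (Suc m) R') = R'"
      using insert_block_append R'_eq by (auto simp: block_structures_def)
  qed
  finally show ?thesis by simp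
qed

lemma sum_structure_weight_extend_open_block:
  "(\<Sum>R'\<in>{R'\<in>block_structures (Suc m) k. class_blocks (Suc m) R' = (False, \<not> ob)}. structure_weight R')
     = structure_sum m (k + (if ob then 0 else 1)) * position_sum (False, \<not> ob) (k + (if ob then 0 else 1))"
proof -
  define h where "h = k + (if ob then 0 else 1)"
  define g where "g d = (fst d @ [Suc m], ob)" for d :: block
  have "structure_sum m h * position_sum (False, \<not> ob) h =
      (\<Sum>(R, i)\<in>block_structures m h \<times> {..<h}. structure_weight R * f (False, \<not> ob) i (h - 1 - i))"
    by (rule structure_sum_mult_position_sum)
  also have "\<dots> = (\<Sum>R'\<in>{R'\<in>block_structures (Suc m) k. class_blocks (Suc m) R' = (False, \<not> ob)}.
      structure_weight R')"
  proof (rule sum.reindex_bij_witness[where j = "\<lambda>(R, i). map_open_block i g R"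
        and i = "\<lambda>R'. (remove_value (Suc m) R', lsg_blocks (Suc m) R')"])
    fix x assume "x \<in> block_structures m h \<times> {..<h}"
    then obtain R i where x: "x = (R, i)" "block_structure m R" "n_open R = h" "i < h"
      by (cases x) (auto simp: block_structures_def)
    then obtain A ys B where AB: "R = A @ (ys, True) # B" "n_open A = i"
        "map_open_block i g R = A @ (ys @ [Suc m], ob) # B"
      using map_open_block_split[of i R g] by (auto simp: g_def)
    have "ys \<noteq> []" using x AB by (auto simp: block_structure_def)
    have struct: "block_structure (Suc m) (A @ (ys @ [Suc m], ob) # B)"
      using block_structure_extend_open_block x AB by simp
    show "(remove_value (Suc m) ((\<lambda>(R, i). map_open_block i g R) x),
        lsg_blocks (Suc m) ((\<lambda>(R, i). map_open_block i g R) x)) = x"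
      using remove_value_top[OF struct] lsg_blocks_top[OF struct] AB x \<open>ys \<noteq> []\<close> by simp
    show "(\<lambda>(R, i). map_open_block i g R) x \<in>
        {R'\<in>block_structures (Suc m) k. class_blocks (Suc m) R' = (False, \<not> ob)}"
      using struct class_blocks_top[OF struct] AB x \<open>ys \<noteq> []\<close> by (auto simp: block_structures_def h_def)
    show "structure_weight ((\<lambda>(R, i). map_open_block i g R) x) =
        (\<lambda>(R, i). structure_weight R * f (False, \<not> ob) i (h - 1 - i)) x"
    proof -
      have "n_open B = h - 1 - i" using AB x by simp
      then show ?thesis
        using structure_weight_remove_top[OF struct] remove_value_top[OF struct] AB x \<open>ys \<noteq> []\<close> by simp
    qed
  next
    fix R' assume "R' \<in> {R'\<in>block_structures (Suc m) k. class_blocks (Suc m) R' = (False, \<not> ob)}"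
    then have R': "block_structure (Suc m) R'" "n_open R' = k" "class_blocks (Suc m) R' = (False, \<not> ob)"
      by (auto simp: block_structures_def)
    then obtain A ys ob' B where R'_eq: "R' = A @ (ys @ [Suc m], ob') # B"
      by (elim block_structure_top_block)
    with R' have struct: "block_structure (Suc m) (A @ (ys @ [Suc m], ob) # B)" and "ys \<noteq> []" "ob' = ob"
      using class_blocks_top[of m A ys ob' B] by auto
    then have R'_eq: "R' = A @ g (ys, True) # B" using R'_eq by (simp add: g_def)
    have "remove_value (Suc m) R' = A @ (ys, True) # B" "lsg_blocks (Suc m) R' = n_open A"
      using remove_value_top[OF struct] lsg_blocks_top[OF struct] R'_eq \<open>ys \<noteq> []\<close>
      by (simp_all add: g_def)
    moreover have "block_structure m (A @ (ys, True) # B)"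
      using block_structure_remove_top[OF struct] \<open>ys \<noteq> []\<close> by simp
    moreover have "n_open (A @ (ys, True) # B) = h" using R'(2) R'_eq by (cases ob) (simp_all add: h_def g_def)
    ultimately show "(remove_value (Suc m) R', lsg_blocks (Suc m) R') \<in> block_structures m h \<times> {..<h}"
      "(\<lambda>(R, i). map_open_block i g R) (remove_value (Suc m) R', lsg_blocks (Suc m) R') = R'"
      using map_open_block_append[of "(ys, True)" A g B] R'_eq by (auto simp: block_structures_def)
  qed
  finally show ?thesis by (simp add: h_def)
qed

lemma position_sum_0 [simp]: "position_sum c 0 = 0"
  by (simp add: position_sum_def)

lemma structure_sum_Suc:
  "structure_sum (Suc m) k = structure_sum m k * position_sum (True, True) (Suc k)
     + structure_sum m (k - 1) * position_sum (True, False) k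
     + structure_sum m k * position_sum (False, False) k
     + structure_sum m (Suc k) * position_sum (False, True) (Suc k)"
proof -
  define F where "F c = (\<Sum>R'\<in>{R'\<in>block_structures (Suc m) k. class_blocks (Suc m) R' = c}. structure_weight R')"
    for c
  have "structure_sum (Suc m) k = (\<Sum>c\<in>UNIV. F c)"
    unfolding structure_sum_def F_def by (rule sum.group[symmetric]) (simp_all add: finite_block_structures)
  also have "\<dots> = F (True, True) + F (True, False) + F (False, False) + F (False, True)"
  proof -
    have U: "(UNIV :: (bool \<times> bool) set) = {(True, True), (True, False), (False, False), (False, True)}"
      by auto
    show ?thesis by (subst U) (simp add: add.assoc)
  qed
  also have "F (True, True) = structure_sum m k * position_sum (True, True) (Suc k)"
    using sum_structure_weight_new_top_block[of m k False] by (simp add: F_def)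
  also have "F (True, False) = structure_sum m (k - 1) * position_sum (True, False) k"
  proof (cases k)
    case 0
    have pos: "n_open R' \<noteq> 0"
      if struct: "block_structure (Suc m) R'" and cls: "class_blocks (Suc m) R' = (True, False)" for R'
    proof -
      obtain A ys ob B where R': "R' = A @ (ys @ [Suc m], ob) # B"
        using struct by (elim block_structure_top_block)
      then have ob using class_blocks_top[of m A ys ob B] struct cls by simp
      then show ?thesis using R' by simp
    qed
    have empty: "{R'\<in>block_structures (Suc m) k. class_blocks (Suc m) R' = (True, False)} = {}"
      using 0 by (auto simp: block_structures_def dest: pos)
    show ?thesis unfolding F_def empty using 0 by simp
  next
    case (Suc h)
    then show ?thesis using sum_structure_weight_new_top_block[of m h True] by (simp add: F_def)
  qed
  also have "F (False, False) = structure_sum m k * position_sum (False, False) k"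
    using sum_structure_weight_extend_open_block[of m k True] by (simp add: F_def)
  also have "F (False, True) = structure_sum m (Suc k) * position_sum (False, True) (Suc k)"
    using sum_structure_weight_extend_open_block[of m k False] by (simp add: F_def)
  finally show ?thesis .
qed

end

section \<open>Runs of a word\<close>

lemma run_end_of:
  assumes "i < length w"
  shows "i \<le> run_end_of w i" "run_end w (run_end_of w i)"
proof -
  have "i \<le> length w - 1 \<and> run_end w (length w - 1)"
    using assms by (auto simp: run_end_def)
  then have "i \<le> run_end_of w i \<and> run_end w (run_end_of w i)"
    unfolding run_end_of_def by (rule LeastI)
  then show "i \<le> run_end_of w i" "run_end w (run_end_of w i)" by auto
qed

lemma run_end_of_le: "i \<le> j \<Longrightarrow> run_end w j \<Longrightarrow> run_end_of w i \<le> j"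
  unfolding run_end_of_def by (rule Least_le) simp

lemma run_start_less_length: "run_start w i \<Longrightarrow> i < length w"
  by (simp add: run_start_def)

locale first_run =
  fixes ys zs :: "nat list"
  assumes nonempty: "ys \<noteq> []" and increasing: "sorted_wrt (<) ys"
    and descent: "zs = [] \<or> hd zs < last ys"
begin

lemma length_first_run_pos: "0 < length ys"
  using nonempty by simp

lemma first_run_less: "i < j \<Longrightarrow> j < length ys \<Longrightarrow> ys ! i < ys ! j"
  using increasing by (simp add: sorted_wrt_iff_nth_less)

lemma first_run_descent: "zs \<noteq> [] \<Longrightarrow> zs ! 0 < ys ! (length ys - 1)"
  using descent nonempty by (simp add: last_conv_nth hd_conv_nth)

lemma run_start_append:
  "run_start (ys @ zs) i \<longleftrightarrow> i = 0 \<or> (length ys \<le> i \<and> run_start zs (i - length ys))"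
proof (cases "i = 0")
  case True
  then show ?thesis using nonempty by (simp add: run_start_def)
next
  case False
  consider "i < length ys" | "i = length ys" | "length ys < i" by linarith
  then show ?thesis
  proof cases
    case 1
    moreover have "i - 1 < length ys" using 1 by simp
    ultimately show ?thesis using False first_run_less[of "i - 1" i] by (simp add: run_start_def nth_append)
  next
    case 2
    then show ?thesis using False first_run_descent by (auto simp: run_start_def nth_append)
  next
    case 3
    then have "i - 1 - length ys = i - length ys - 1" by simp
    then show ?thesis using 3 by (auto simp: run_start_def nth_append)
  qed
qed

lemma run_end_append:
  "run_end (ys @ zs) i \<longleftrightarrow> i = length ys - 1 \<or> (length ys \<le> i \<and> run_end zs (i - length ys))"
proof -
  consider "i < length ys - 1" | "i = length ys - 1" | "length ys \<le> i" by linarith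
  then show ?thesis
  proof cases
    case 1
    then have "ys ! i < ys ! Suc i" using first_run_less[of i "Suc i"] by simp
    then show ?thesis using 1 by (auto simp: run_end_def nth_append)
  next
    case 2
    have "length ys - 1 < length ys + length zs" using nonempty by (cases ys) auto
    then show ?thesis using first_run_descent nonempty 2
      by (cases "zs = []") (auto simp: run_end_def nth_append)
  next
    case 3
    have "(ys @ zs) ! i = zs ! (i - length ys)" "(ys @ zs) ! Suc i = zs ! Suc (i - length ys)"
      using 3 by (simp_all add: nth_append Suc_diff_le)
    moreover have "i < length (ys @ zs) \<longleftrightarrow> i - length ys < length zs"
      "Suc i = length (ys @ zs) \<longleftrightarrow> Suc (i - length ys) = length zs"
      using 3 by auto
    ultimately have "run_end (ys @ zs) i \<longleftrightarrow> run_end zs (i - length ys)"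
      unfolding run_end_def by presburger
    moreover have "i \<noteq> length ys - 1" using 3 nonempty by (cases ys) auto
    ultimately show ?thesis using 3 by simp
  qed
qed

lemma run_end_of_first: "i < length ys \<Longrightarrow> run_end_of (ys @ zs) i = length ys - 1"
  unfolding run_end_of_def
  by (rule Least_equality) (use run_end_append in auto)

lemma run_end_of_shift:
  assumes "length ys \<le> i" "i < length (ys @ zs)"
  shows "run_end_of (ys @ zs) i = length ys + run_end_of zs (i - length ys)"
  unfolding run_end_of_def[of "ys @ zs"]
proof (rule Least_equality)
  have "i - length ys < length zs" using assms by simp
  from run_end_of[OF this] show "i \<le> length ys + run_end_of zs (i - length ys) \<and>
      run_end (ys @ zs) (length ys + run_end_of zs (i - length ys))"
    using assms run_end_append by auto
next
  fix j assume j: "i \<le> j \<and> run_end (ys @ zs) j"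
  then have "length ys \<le> j" using assms by simp
  moreover from this have "j \<noteq> length ys - 1" using nonempty by (cases ys) auto
  then have "run_end zs (j - length ys)" using j run_end_append by simp
  then have "run_end_of zs (i - length ys) \<le> j - length ys"
    using j by (intro run_end_of_le) auto
  then show "length ys + run_end_of zs (i - length ys) \<le> j" using \<open>length ys \<le> j\<close> by simp
qed

lemma run_elems_first: "run_elems (ys @ zs) 0 = set ys"
proof -
  have "run_elems (ys @ zs) 0 = {ys ! j | j. j < length ys}"
    unfolding run_elems_def using run_end_of_first[of 0] nonempty
    by (metis (no_types, lifting) Suc_pred' length_greater_0_conv less_Suc_eq_le nth_append le0)
  also have "\<dots> = set ys" by (auto simp: in_set_conv_nth)
  finally show ?thesis .
qed

lemma run_elems_shift:
  assumes "length ys \<le> i" "i < length (ys @ zs)"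
  shows "run_elems (ys @ zs) i = run_elems zs (i - length ys)"
proof (intro equalityI subsetI)
  fix x assume "x \<in> run_elems (ys @ zs) i"
  then obtain j where "x = (ys @ zs) ! j" "i \<le> j" "j \<le> length ys + run_end_of zs (i - length ys)"
    unfolding run_elems_def run_end_of_shift[OF assms] by blast
  then have "x = zs ! (j - length ys)" "i - length ys \<le> j - length ys"
    "j - length ys \<le> run_end_of zs (i - length ys)"
    using assms by (auto simp: nth_append)
  then show "x \<in> run_elems zs (i - length ys)" unfolding run_elems_def by blast
next
  fix x assume "x \<in> run_elems zs (i - length ys)"
  then obtain j where "x = zs ! j" "i - length ys \<le> j" "j \<le> run_end_of zs (i - length ys)"
    unfolding run_elems_def by blast
  then have "x = (ys @ zs) ! (j + length ys)" "i \<le> j + length ys"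
    "j + length ys \<le> length ys + run_end_of zs (i - length ys)"
    using assms by (auto simp: nth_append)
  then show "x \<in> run_elems (ys @ zs) i" unfolding run_elems_def run_end_of_shift[OF assms] by blast
qed

lemma straddles_first: "straddles (ys @ zs) 0 x \<longleftrightarrow> block_straddles x (ys, False)"
  unfolding straddles_def run_elems_first block_straddles_def by simp

lemma straddles_shift:
  "run_start zs st \<Longrightarrow> straddles (ys @ zs) (st + length ys) x \<longleftrightarrow> straddles zs st x"
  unfolding straddles_def using run_elems_shift[of "st + length ys"] run_start_less_length by simp

lemma run_starts_append:
  "{st. run_start (ys @ zs) st \<and> Q st} = (if Q 0 then {0} else {})
     \<union> (\<lambda>st. st + length ys) ` {st. run_start zs st \<and> Q (st + length ys)}"
proof (intro equalityI subsetI)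
  fix st assume "st \<in> {st. run_start (ys @ zs) st \<and> Q st}"
  then have st: "run_start (ys @ zs) st" "Q st" by auto
  show "st \<in> (if Q 0 then {0} else {}) \<union> (\<lambda>st. st + length ys) ` {st. run_start zs st \<and> Q (st + length ys)}"
  proof (cases "st = 0")
    case False
    then have "length ys \<le> st" "run_start zs (st - length ys)" using st run_start_append by auto
    moreover have "st = (st - length ys) + length ys" using \<open>length ys \<le> st\<close> by simp
    ultimately show ?thesis using st(2) by (intro UnI2) (auto intro!: image_eqI[of _ _ "st - length ys"])
  qed (use st in simp)
next
  fix st
  assume "st \<in> (if Q 0 then {0} else {}) \<union> (\<lambda>st. st + length ys) ` {st. run_start zs st \<and> Q (st + length ys)}"
  then show "st \<in> {st. run_start (ys @ zs) st \<and> Q st}"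
  proof
    assume "st \<in> (if Q 0 then {0} else {})"
    then show ?thesis using run_start_append by (auto split: if_splits)
  next
    assume "st \<in> (\<lambda>st. st + length ys) ` {st. run_start zs st \<and> Q (st + length ys)}"
    then obtain st' where "st = st' + length ys" "run_start zs st'" "Q (st' + length ys)" by auto
    then show ?thesis using run_start_append[of st] by simp
  qed
qed

lemma card_run_starts_append:
  "card {st. run_start (ys @ zs) st \<and> Q st} =
     (if Q 0 then 1 else 0) + card {st. run_start zs st \<and> Q (st + length ys)}"
proof -
  have "finite {st. run_start zs st \<and> Q (st + length ys)}"
    by (rule finite_subset[of _ "{..<length zs}"]) (auto simp: run_start_def)
  moreover have "inj_on (\<lambda>st. st + length ys) X" for X by (auto simp: inj_on_def)
  moreover have "0 \<notin> (\<lambda>st. st + length ys) ` {st. run_start zs st \<and> Q (st + length ys)}"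
    using nonempty by auto
  ultimately show ?thesis unfolding run_starts_append
    by (subst card_Un_disjoint) (auto simp: card_image)
qed

lemma lsg_first_run:
  assumes "k < length ys"
  shows "lsg (ys @ zs) k = 0"
proof -
  let ?x = "(ys @ zs) ! k"
  have "lsg (ys @ zs) k = (if run_end_of (ys @ zs) 0 < k \<and> straddles (ys @ zs) 0 ?x then 1 else 0)
      + card {st. run_start zs st \<and> run_end_of (ys @ zs) (st + length ys) < k
                \<and> straddles (ys @ zs) (st + length ys) ?x}"
    unfolding lsg_def by (rule card_run_starts_append)
  also have "run_end_of (ys @ zs) 0 = length ys - 1" using run_end_of_first nonempty by simp
  also have "{st. run_start zs st \<and> run_end_of (ys @ zs) (st + length ys) < k
                \<and> straddles (ys @ zs) (st + length ys) ?x} = {}"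
  proof -
    have "st + length ys \<le> run_end_of (ys @ zs) (st + length ys)" if "run_start zs st" for st
      using that run_start_less_length run_end_of(1) by simp
    then show ?thesis using assms by fastforce
  qed
  moreover have "\<not> length ys - 1 < k" using assms by linarith
  ultimately show ?thesis by simp
qed

lemma rsg_first_run:
  assumes "k < length ys"
  shows "rsg (ys @ zs) k = card {st. run_start zs st \<and> straddles zs st ((ys @ zs) ! k)}"
proof -
  let ?x = "(ys @ zs) ! k"
  have "rsg (ys @ zs) k = (if k < 0 \<and> straddles (ys @ zs) 0 ?x then 1 else 0)
      + card {st. run_start zs st \<and> k < st + length ys \<and> straddles (ys @ zs) (st + length ys) ?x}"
    unfolding rsg_def by (rule card_run_starts_append)
  also have "{st. run_start zs st \<and> k < st + length ys \<and> straddles (ys @ zs) (st + length ys) ?x} =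
      {st. run_start zs st \<and> straddles zs st ?x}"
    using straddles_shift assms by auto
  finally show ?thesis by simp
qed

lemma lsg_after_first_run:
  assumes "length ys \<le> k" "k < length (ys @ zs)"
  shows "lsg (ys @ zs) k =
    (if block_straddles (zs ! (k - length ys)) (ys, False) then 1 else 0) + lsg zs (k - length ys)"
proof -
  let ?x = "(ys @ zs) ! k"
  have x: "?x = zs ! (k - length ys)" using assms by (simp add: nth_append)
  have first_before: "run_end_of (ys @ zs) 0 < k"
    using run_end_of_first[OF length_first_run_pos] length_first_run_pos assms by linarith
  have "lsg (ys @ zs) k = (if run_end_of (ys @ zs) 0 < k \<and> straddles (ys @ zs) 0 ?x then 1 else 0)
      + card {st. run_start zs st \<and> run_end_of (ys @ zs) (st + length ys) < k
                \<and> straddles (ys @ zs) (st + length ys) ?x}"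
    unfolding lsg_def by (rule card_run_starts_append)
  also have "straddles (ys @ zs) 0 ?x \<longleftrightarrow> block_straddles (zs ! (k - length ys)) (ys, False)"
    using straddles_first x by simp
  also have "{st. run_start zs st \<and> run_end_of (ys @ zs) (st + length ys) < k
                \<and> straddles (ys @ zs) (st + length ys) ?x} =
      {st. run_start zs st \<and> run_end_of zs st < k - length ys \<and> straddles zs st (zs ! (k - length ys))}"
  proof (rule Collect_cong)
    fix st
    show "(run_start zs st \<and> run_end_of (ys @ zs) (st + length ys) < k
                \<and> straddles (ys @ zs) (st + length ys) ?x) =
        (run_start zs st \<and> run_end_of zs st < k - length ys \<and> straddles zs st (zs ! (k - length ys)))"
    proof (cases "run_start zs st")
      case True
      then have "run_end_of (ys @ zs) (st + length ys) = length ys + run_end_of zs st"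
        using run_end_of_shift[of "st + length ys"] run_start_less_length by simp
      then show ?thesis using True straddles_shift[OF True] assms x by auto
    qed simp
  qed
  finally show ?thesis using first_before by (simp add: lsg_def)
qed

lemma rsg_after_first_run:
  assumes "length ys \<le> k"
  shows "rsg (ys @ zs) k = rsg zs (k - length ys)"
proof -
  let ?x = "(ys @ zs) ! k"
  have "rsg (ys @ zs) k = (if k < 0 \<and> straddles (ys @ zs) 0 ?x then 1 else 0)
      + card {st. run_start zs st \<and> k < st + length ys \<and> straddles (ys @ zs) (st + length ys) ?x}"
    unfolding rsg_def by (rule card_run_starts_append)
  also have "{st. run_start zs st \<and> k < st + length ys \<and> straddles (ys @ zs) (st + length ys) ?x} =
      {st. run_start zs st \<and> k - length ys < st \<and> straddles zs st (zs ! (k - length ys))}"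
    using straddles_shift assms by (auto simp: nth_append)
  finally show ?thesis by (simp add: rsg_def)
qed
end

section \<open>Closed block structures are permutations\<close>

definition run_blocks :: "block list \<Rightarrow> bool" where
  "run_blocks R \<longleftrightarrow> (\<forall>c\<in>set R. fst c \<noteq> [] \<and> sorted_wrt (<) (fst c) \<and> \<not> snd c) \<and>
     successively descent_or_open R \<and> distinct (word_of R)"

lemma run_blocks_Cons:
  assumes "run_blocks (c # R)"
  shows "run_blocks R" "first_run (fst c) (word_of R)" "c = (fst c, False)"
    "distinct (fst c)" "set (fst c) \<inter> set (word_of R) = {}"
proof -
  show "run_blocks R" using assms by (auto simp: run_blocks_def successively_Cons)
  show "c = (fst c, False)" using assms by (cases c) (auto simp: run_blocks_def)
  show "distinct (fst c)" "set (fst c) \<inter> set (word_of R) = {}" using assms by (auto simp: run_blocks_def)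
  have "word_of R = [] \<or> hd (word_of R) < last (fst c)"
  proof (cases R)
    case (Cons d R')
    then have "descent_or_open c d" "fst d \<noteq> []" "\<not> snd c"
      using assms by (auto simp: run_blocks_def successively_Cons)
    then show ?thesis using Cons by simp
  qed simp
  then show "first_run (fst c) (word_of R)"
    using assms by unfold_locales (auto simp: run_blocks_def)
qed

lemma card_straddling_runs:
  "run_blocks R \<Longrightarrow> card {st. run_start (word_of R) st \<and> straddles (word_of R) st x} = n_straddling x R"
proof (induction R)
  case (Cons c R)
  note c = run_blocks_Cons[OF Cons.prems]
  interpret first_run "fst c" "word_of R" by (rule c(2))
  have "card {st. run_start (word_of (c # R)) st \<and> straddles (word_of (c # R)) st x} =
      (if straddles (word_of (c # R)) 0 x then 1 else 0) +
      card {st. run_start (word_of R) st \<and> straddles (word_of (c # R)) (st + length (fst c)) x}"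
    by (simp add: card_run_starts_append)
  also have "{st. run_start (word_of R) st \<and> straddles (word_of (c # R)) (st + length (fst c)) x} =
      {st. run_start (word_of R) st \<and> straddles (word_of R) st x}"
    using straddles_shift by auto
  also have "straddles (word_of (c # R)) 0 x \<longleftrightarrow> block_straddles x c"
    using straddles_first c(3) by (metis word_of_simps(2))
  finally show ?case using Cons.IH[OF c(1)] by simp
qed (simp add: run_start_def)

lemma run_stats_word_of:
  assumes "run_blocks R" "k < length (word_of R)"
  shows "(run_start (word_of R) k, run_end (word_of R) k) = class_blocks (word_of R ! k) R \<and>
         lsg (word_of R) k = lsg_blocks (word_of R ! k) R \<and>
         rsg (word_of R) k = rsg_blocks (word_of R ! k) R"
  using assms
proof (induction R arbitrary: k)
  case (Cons c R)
  note c = run_blocks_Cons[OF Cons.prems(1)]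
  interpret first_run "fst c" "word_of R" by (rule c(2))
  show ?case
  proof (cases "k < length (fst c)")
    case True
    define x where "x = fst c ! k"
    have x: "word_of (c # R) ! k = x" "x \<in> set (fst c)" using True by (simp_all add: x_def nth_append)
    have "x = hd (fst c) \<longleftrightarrow> k = 0" "x = last (fst c) \<longleftrightarrow> k = length (fst c) - 1"
      using c(4) True length_first_run_pos
      by (simp_all add: x_def hd_conv_nth last_conv_nth nth_eq_iff_index_eq)
    then have "class_blocks x (c # R) = (k = 0, k = length (fst c) - 1)"
      using x c(3) by simp (metis snd_conv)
    moreover have "lsg (word_of (c # R)) k = 0"
      using lsg_first_run True by simp
    moreover have "rsg (word_of (c # R)) k = n_straddling x R"
      using rsg_first_run True card_straddling_runs[OF c(1)] x by simp
    ultimately show ?thesis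
      using run_start_append run_end_append True x by simp
  next
    case False
    define k' where "k' = k - length (fst c)"
    have k': "k' < length (word_of R)" using Cons.prems(2) False by (simp add: k'_def)
    define x where "x = word_of R ! k'"
    have x: "word_of (c # R) ! k = x" "x \<notin> set (fst c)"
      using False c(5) k' by (auto simp: x_def k'_def nth_append)
    have "run_start (word_of (c # R)) k \<longleftrightarrow> run_start (word_of R) k'"
      "run_end (word_of (c # R)) k \<longleftrightarrow> run_end (word_of R) k'"
      using run_start_append run_end_append False length_first_run_pos by (auto simp: k'_def)
    moreover have "lsg (word_of (c # R)) k = (if block_straddles x c then 1 else 0) + lsg (word_of R) k'"
      using lsg_after_first_run[of k] False Cons.prems(2) c(3) by (simp add: x_def k'_def)
    moreover have "rsg (word_of (c # R)) k = rsg (word_of R) k'"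
      using rsg_after_first_run False by (simp add: k'_def)
    ultimately show ?thesis using Cons.IH[OF c(1) k'] x by (simp add: x_def)
  qed
qed simp

fun runs :: "nat list \<Rightarrow> nat list list" where
  "runs [] = []"
| "runs [x] = [[x]]"
| "runs (x # y # zs) =
     (if x < y then (x # hd (runs (y # zs))) # tl (runs (y # zs)) else [x] # runs (y # zs))"

lemma runs_Cons: "runs xs \<noteq> [] \<and> hd (runs xs) \<noteq> [] \<and> hd (hd (runs xs)) = hd xs" if "xs \<noteq> []"
  using that by (induction xs rule: runs.induct) auto

lemma concat_runs: "concat (runs xs) = xs"
proof (induction xs rule: runs.induct)
  case (3 x y zs)
  then show ?case using runs_Cons[of "y # zs"] by (cases "runs (y # zs)") auto
qed auto

lemma runs_increasing: "ys \<in> set (runs xs) \<Longrightarrow> ys \<noteq> [] \<and> sorted_wrt (<) ys"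
proof (induction xs arbitrary: ys rule: runs.induct)
  case (3 x y zs)
  obtain Y Ys where Y: "runs (y # zs) = Y # Ys" "Y \<noteq> []" "hd Y = y"
    using runs_Cons[of "y # zs"] by (cases "runs (y # zs)") auto
  show ?case
  proof (cases "x < y")
    case True
    have "sorted_wrt (<) Y" using "3.IH"(1)[OF True] Y by simp
    moreover have "\<forall>z\<in>set Y. x < z"
    proof
      fix z assume "z \<in> set Y"
      then have "z = hd Y \<or> hd Y < z" using \<open>sorted_wrt (<) Y\<close> Y(2) by (cases Y) auto
      then show "x < z" using True Y(3) by auto
    qed
    ultimately show ?thesis using "3.prems" "3.IH"(1)[OF True] True Y(1) by auto
  next
    case False
    then show ?thesis using 3 by auto
  qed
qed auto

lemma successively_runs: "distinct xs \<Longrightarrow> successively (\<lambda>ys zs. hd zs < last ys) (runs xs)"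
proof (induction xs rule: runs.induct)
  case (3 x y zs)
  obtain Y Ys where Y: "runs (y # zs) = Y # Ys" "Y \<noteq> []" "hd Y = y"
    using runs_Cons[of "y # zs"] by (cases "runs (y # zs)") auto
  have IH: "successively (\<lambda>ys zs. hd zs < last ys) (runs (y # zs))"
    using 3 by (cases "x < y") auto
  show ?case
  proof (cases "x < y")
    case True
    then show ?thesis using IH Y by (auto simp: successively_Cons)
  next
    case False
    then have "y < x" using "3.prems" by auto
    then show ?thesis using False IH Y by (auto simp: successively_Cons)
  qed
qed auto

lemma (in first_run) runs_append: "runs (ys @ zs) = ys # runs zs"
  using nonempty increasing descent
proof (induction ys)
  case (Cons x ys')
  show ?case
  proof (cases ys')
    case Nil
    then show ?thesis using Cons.prems by (cases zs) auto
  next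
    case (Cons x' ys'')
    then have "x < x'" "runs (ys' @ zs) = ys' # runs zs"
      using Cons.IH Cons.prems by auto
    then show ?thesis using Cons by simp
  qed
qed simp

lemma runs_word_of: "run_blocks R \<Longrightarrow> runs (word_of R) = map fst R"
proof (induction R)
  case (Cons c R)
  note c = run_blocks_Cons[OF Cons.prems]
  interpret first_run "fst c" "word_of R" by (rule c(2))
  show ?case using runs_append Cons.IH[OF c(1)] by simp
qed simp

definition closed_runs :: "nat list \<Rightarrow> block list" where
  "closed_runs xs = map (\<lambda>ys. (ys, False)) (runs xs)"

lemma word_of_closed_runs: "word_of (closed_runs xs) = xs"
  by (simp add: closed_runs_def word_of_def comp_def concat_runs)

lemma length_perms: "\<sigma> \<in> perms n \<Longrightarrow> length \<sigma> = n"
  using distinct_card[of \<sigma>] by (auto simp: perms_def)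

lemma closed_runs_in_block_structures: "\<sigma> \<in> perms n \<Longrightarrow> closed_runs \<sigma> \<in> block_structures n 0"
proof -
  assume \<sigma>: "\<sigma> \<in> perms n"
  then have "successively descent_or_open (closed_runs \<sigma>)"
    unfolding closed_runs_def successively_map using successively_runs[of \<sigma>] by (simp add: perms_def)
  moreover have "\<forall>c\<in>set (closed_runs \<sigma>). fst c \<noteq> [] \<and> sorted_wrt (<) (fst c)"
    using runs_increasing by (auto simp: closed_runs_def)
  moreover have "n_open (closed_runs \<sigma>) = 0" by (simp add: closed_runs_def n_open_def)
  ultimately show ?thesis
    using \<sigma> by (simp add: block_structures_def block_structure_def word_of_closed_runs perms_def)
qed

lemma run_blocks_if_closed: "R \<in> block_structures n 0 \<Longrightarrow> run_blocks R"
  by (auto simp: block_structures_def block_structure_def run_blocks_def n_open_def filter_empty_conv)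

lemma closed_runs_word_of: "R \<in> block_structures n 0 \<Longrightarrow> closed_runs (word_of R) = R"
proof -
  assume R: "R \<in> block_structures n 0"
  then have "\<forall>c\<in>set R. \<not> snd c" using run_blocks_if_closed by (simp add: run_blocks_def)
  then show ?thesis
    unfolding closed_runs_def runs_word_of[OF run_blocks_if_closed[OF R]]
    by (induction R) (auto simp: prod_eq_iff)
qed

lemma structure_weight_closed:
  assumes "R \<in> block_structures n 0"
  shows "structure_weight f R = (\<Prod>k<length (word_of R).
    f (run_start (word_of R) k, run_end (word_of R) k) (lsg (word_of R) k) (rsg (word_of R) k))"
  unfolding structure_weight_def prod_list_map_conv_prod_nth
  using run_stats_word_of[OF run_blocks_if_closed[OF assms]] by (auto simp: value_weight_def)

theorem structure_sum_closed_eq_sum_perms: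
  fixes f :: "bool \<times> bool \<Rightarrow> nat \<Rightarrow> nat \<Rightarrow> 'a::comm_semiring_1"
  shows "structure_sum f n 0 =
    (\<Sum>\<sigma>\<in>perms n. \<Prod>k<n. f (run_start \<sigma> k, run_end \<sigma> k) (lsg \<sigma> k) (rsg \<sigma> k))"
  unfolding structure_sum_def
proof (rule sum.reindex_bij_witness[where j = word_of and i = closed_runs])
  fix R assume R: "R \<in> block_structures n 0"
  show "closed_runs (word_of R) = R" using closed_runs_word_of[OF R] .
  show \<sigma>: "word_of R \<in> perms n" using R by (simp add: block_structures_def block_structure_def perms_def)
  show "(\<Prod>k<n. f (run_start (word_of R) k, run_end (word_of R) k) (lsg (word_of R) k) (rsg (word_of R) k))
      = structure_weight f R"
    unfolding structure_weight_closed[OF R] length_perms[OF \<sigma>] by (rule refl)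
qed (simp_all add: word_of_closed_runs closed_runs_in_block_structures)

lemma qbr_conv_sum: "qbr x y n = (\<Sum>i<n. x ^ i * y ^ (n - 1 - i))"
proof -
  have "qbr x y n = (\<Sum>i<n. x ^ (n - 1 - i) * y ^ i)" by (simp add: qbr_def)
  also have "\<dots> = (\<Sum>i<n. x ^ (n - 1 - (n - Suc i)) * y ^ (n - Suc i))"
    by (rule sum.nat_diff_reindex[symmetric])
  also have "\<dots> = (\<Sum>i<n. x ^ i * y ^ (n - 1 - i))"
    by (rule sum.cong) auto
  finally show ?thesis .
qed

lemma power_sum_filter:
  fixes c :: "'a::comm_monoid_mult" and n :: nat
  shows "c ^ (\<Sum>k\<in>{k. k < n \<and> P k}. g k) = (\<Prod>k<n. if P k then c ^ g k else 1)"
proof -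
  have "c ^ (\<Sum>k\<in>{k. k < n \<and> P k}. g k) = (\<Prod>k\<in>{k \<in> {..<n}. P k}. c ^ g k)"
    by (simp add: power_sum conj_commute)
  also have "\<dots> = (\<Prod>k<n. if P k then c ^ g k else 1)"
    using prod.inter_filter[of "{..<n}" "\<lambda>k. c ^ g k" P] by simp
  finally show ?thesis .
qed

lemma power_nruns_conv_prod:
  fixes c :: "'a::comm_monoid_mult"
  shows "c ^ nruns \<sigma> = (\<Prod>k<length \<sigma>. if run_start \<sigma> k then c else 1)"
    and "c ^ (length \<sigma> - nruns \<sigma>) = (\<Prod>k<length \<sigma>. if run_start \<sigma> k then 1 else c)"
proof -
  define S where "S = {k \<in> {..<length \<sigma>}. run_start \<sigma> k}"
  have nruns: "nruns \<sigma> = card S"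
    unfolding nruns_def S_def by (metis (lifting) lessThan_iff run_start_less_length)
  then show "c ^ nruns \<sigma> = (\<Prod>k<length \<sigma>. if run_start \<sigma> k then c else 1)"
    unfolding S_def by (simp add: prod.inter_filter[symmetric])
  have "{..<length \<sigma>} - S = {k \<in> {..<length \<sigma>}. \<not> run_start \<sigma> k}" by (auto simp: S_def)
  then have "length \<sigma> - nruns \<sigma> = card {k \<in> {..<length \<sigma>}. \<not> run_start \<sigma> k}"
    unfolding nruns by (metis card_Diff_subset card_lessThan finite_lessThan S_def
        finite_subset mem_Collect_eq subsetI)
  then have "c ^ (length \<sigma> - nruns \<sigma>) = (\<Prod>k<length \<sigma>. if \<not> run_start \<sigma> k then c else 1)"
    using prod.inter_filter[of "{..<length \<sigma>}" "\<lambda>_. c" "\<lambda>k. \<not> run_start \<sigma> k"] by simp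
  also have "\<dots> = (\<Prod>k<length \<sigma>. if run_start \<sigma> k then 1 else c)"
    by (rule prod.cong) auto
  finally show "c ^ (length \<sigma> - nruns \<sigma>) = (\<Prod>k<length \<sigma>. if run_start \<sigma> k then 1 else c)" .
qed

context
  fixes a b r s t u p q v w :: "'a::comm_ring_1"
begin

definition class_weight :: "bool \<times> bool \<Rightarrow> nat \<Rightarrow> nat \<Rightarrow> 'a" where
  "class_weight c l k = (if fst c then a * (if snd c then r ^ l * s ^ k else p ^ l * q ^ k)
                       else b * (if snd c then v ^ l * w ^ k else t ^ l * u ^ k))"

lemma position_sum_class_weight:
  "position_sum class_weight (True, True) h = a * qbr r s h"
  "position_sum class_weight (True, False) h = a * qbr p q h"
  "position_sum class_weight (False, False) h = b * qbr t u h"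
  "position_sum class_weight (False, True) h = b * qbr v w h"
  by (simp_all add: position_sum_def class_weight_def qbr_conv_sum sum_distrib_left)

(* The weights a[i]_{p,q} of the openers are split off from lambda_i, leaving b[i]_{v,w}
   for the matching closer. *)
definition opener_product :: "nat \<Rightarrow> 'a" where
  "opener_product k = (\<Prod>i<k. a * qbr p q (Suc i))"

lemma structure_sum_class_weight:
  "structure_sum class_weight m k = motzkin_sum (bcoef a b r s t u) (lcoef a b p q v w) m k * opener_product k"
proof (induction m arbitrary: k)
  case 0
  show ?case by (simp add: structure_sum_def block_structures_0 structure_weight_def opener_product_def)
next
  case (Suc m)
  have opener_Suc: "opener_product (Suc j) = opener_product j * (a * qbr p q (Suc j))" for j
    by (simp add: opener_product_def)
  show ?case
  proof (cases k)
    case 0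
    then show ?thesis
      unfolding structure_sum_Suc Suc.IH position_sum_class_weight
      by (simp add: opener_Suc opener_product_def bcoef_def[of a b r s t u 0]
          lcoef_def[of a b p q v w "Suc 0"] qbr_def algebra_simps)
  next
    case (Suc j)
    then show ?thesis
      unfolding structure_sum_Suc Suc.IH position_sum_class_weight
      by (simp add: opener_Suc bcoef_def[of a b r s t u "Suc j"]
          lcoef_def[of a b p q v w "Suc (Suc j)"] algebra_simps)
  qed
qed

lemma run_statistics_monomial:
  assumes "length \<sigma> = n"
  shows "r ^ lsgX is_sing \<sigma> * s ^ rsgX is_sing \<sigma>
      * t ^ lsgX is_cont \<sigma> * u ^ rsgX is_cont \<sigma>
      * p ^ lsgX is_op \<sigma> * q ^ rsgX is_op \<sigma>
      * v ^ lsgX is_clos \<sigma> * w ^ rsgX is_clos \<sigma>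
      * a ^ nruns \<sigma> * b ^ (n - nruns \<sigma>) =
   (\<Prod>k<n. class_weight (run_start \<sigma> k, run_end \<sigma> k) (lsg \<sigma> k) (rsg \<sigma> k))"
proof -
  have "(\<Prod>k<length \<sigma>. class_weight (run_start \<sigma> k, run_end \<sigma> k) (lsg \<sigma> k) (rsg \<sigma> k)) =
     (\<Prod>k<length \<sigma>. (if is_sing \<sigma> k then r ^ lsg \<sigma> k else 1) * (if is_sing \<sigma> k then s ^ rsg \<sigma> k else 1)
       * (if is_cont \<sigma> k then t ^ lsg \<sigma> k else 1) * (if is_cont \<sigma> k then u ^ rsg \<sigma> k else 1)
       * (if is_op \<sigma> k then p ^ lsg \<sigma> k else 1) * (if is_op \<sigma> k then q ^ rsg \<sigma> k else 1)
       * (if is_clos \<sigma> k then v ^ lsg \<sigma> k else 1) * (if is_clos \<sigma> k then w ^ rsg \<sigma> k else 1)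
       * (if run_start \<sigma> k then a else 1) * (if run_start \<sigma> k then 1 else b))"
  proof (rule prod.cong[OF refl])
    fix k assume "k \<in> {..<length \<sigma>}"
    then show "class_weight (run_start \<sigma> k, run_end \<sigma> k) (lsg \<sigma> k) (rsg \<sigma> k) =
     (if is_sing \<sigma> k then r ^ lsg \<sigma> k else 1) * (if is_sing \<sigma> k then s ^ rsg \<sigma> k else 1)
       * (if is_cont \<sigma> k then t ^ lsg \<sigma> k else 1) * (if is_cont \<sigma> k then u ^ rsg \<sigma> k else 1)
       * (if is_op \<sigma> k then p ^ lsg \<sigma> k else 1) * (if is_op \<sigma> k then q ^ rsg \<sigma> k else 1)
       * (if is_clos \<sigma> k then v ^ lsg \<sigma> k else 1) * (if is_clos \<sigma> k then w ^ rsg \<sigma> k else 1)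
       * (if run_start \<sigma> k then a else 1) * (if run_start \<sigma> k then 1 else b)"
      by (cases "run_start \<sigma> k"; cases "run_end \<sigma> k")
        (simp_all add: class_weight_def is_sing_def is_cont_def is_op_def is_clos_def mult.commute mult.left_commute)
  qed
  also have "\<dots> = r ^ lsgX is_sing \<sigma> * s ^ rsgX is_sing \<sigma>
      * t ^ lsgX is_cont \<sigma> * u ^ rsgX is_cont \<sigma>
      * p ^ lsgX is_op \<sigma> * q ^ rsgX is_op \<sigma>
      * v ^ lsgX is_clos \<sigma> * w ^ rsgX is_clos \<sigma>
      * a ^ nruns \<sigma> * b ^ (length \<sigma> - nruns \<sigma>)"
    unfolding prod.distrib lsgX_def rsgX_def power_sum_filter power_nruns_conv_prod ..
  finally show ?thesis using assms by simp
qed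

end

theorem theorem1:
  fixes a b r s t u p q v w :: "'a::comm_ring_1"
    and L :: "'a poly \<Rightarrow> 'a"
  assumes L_add: "\<And>f g. L (f + g) = L f + L g"
    and L_smult: "\<And>c f. L (smult c f) = c * L f"
    and L_one: "L 1 = 1"
    and L_orth: "\<And>m. m \<ge> 1 \<Longrightarrow> L (OP a b r s t u p q v w m) = 0"
  shows "L ([:0, 1:] ^ n) =
    (\<Sum>\<sigma>\<in>perms n.
        r ^ lsgX is_sing \<sigma> * s ^ rsgX is_sing \<sigma>
      * t ^ lsgX is_cont \<sigma> * u ^ rsgX is_cont \<sigma>
      * p ^ lsgX is_op \<sigma> * q ^ rsgX is_op \<sigma>
      * v ^ lsgX is_clos \<sigma> * w ^ rsgX is_clos \<sigma>
      * a ^ nruns \<sigma> * b ^ (n - nruns \<sigma>))"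
proof -
  let ?f = "class_weight a b r s t u p q v w"
  have "L ([:0, 1:] ^ n) = structure_sum ?f n 0"
    using moment_eq_motzkin_sum[OF assms] by (simp add: structure_sum_class_weight opener_product_def)
  also have "\<dots> = (\<Sum>\<sigma>\<in>perms n. \<Prod>k<n. ?f (run_start \<sigma> k, run_end \<sigma> k) (lsg \<sigma> k) (rsg \<sigma> k))"
    by (rule structure_sum_closed_eq_sum_perms)
  finally show ?thesis by (simp add: run_statistics_monomial length_perms cong: sum.cong)
qed

end
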